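(* Let $\Delta\ge2$ be an integer and for $\alpha\in(0,1)$ set $f_\alpha(r,s)=\dfrac{2r^\alpha}{r^\alpha+(\Delta-1)s^\alpha}$ for $r,s>0$. There exists $\varepsilon_0>0$ such that for every $\varepsilon\in(0,\varepsilon_0)$, with $\alpha=1/2+\varepsilon$, and all $0<a<2/\Delta<b<2$, we have $f_\alpha(a,b)>a$ or $f_\alpha(b,a)<b$. *)

theory Defs
  imports Complex_Main
begin

definition f_alpha :: "nat \<Rightarrow> real \<Rightarrow> real \<Rightarrow> real \<Rightarrow> real" where
  "f_alpha \<Delta> \<alpha> r s = 2 * r powr \<alpha> / (r powr \<alpha> + (real \<Delta> - 1) * s powr \<alpha>)"

end

theory Submission
  imports Defs "HOL-Analysis.Analysis"
begin

(* Put k = \<Delta> - 1, \<alpha> = 1/2 + \<epsilon> and r = b/a > 1. After dividing by a powr \<alpha>, the two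
   failures f(a,b) \<le> a and f(b,a) \<ge> b read 2 \<le> a (1 + k r^\<alpha>) and a (r + k r^(1-\<alpha>)) \<le> 2,
   hence r - 1 \<le> k r^(1-\<alpha>) (r^(2\<epsilon>) - 1). The first failure together with b < 2 also gives
   r^(1-\<alpha>) < \<Delta>, and Bernoulli's inequality r^(2\<epsilon>) - 1 \<le> 2\<epsilon> (r - 1) then yields
   r - 1 \<le> 2\<epsilon> k \<Delta> (r - 1), which is impossible once 2\<epsilon> k \<Delta> < 1. *)

lemma powr_le_Bernoulli:
  fixes r \<beta> :: real
  assumes "0 < r" "0 \<le> \<beta>" "\<beta> \<le> 1"
  shows "r powr \<beta> \<le> 1 + \<beta> * (r - 1)"
  using Youngs_inequality_0[of \<beta> "1 - \<beta>" r 1] assms by (simp add: algebra_simps)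

lemma f_alpha_eq_ratio:
  assumes "0 < x" "0 < y"
  shows "f_alpha \<Delta> \<alpha> x y = 2 / (1 + (real \<Delta> - 1) * (y / x) powr \<alpha>)"
proof -
  have "x powr \<alpha> > 0" using assms by simp
  then show ?thesis
    unfolding f_alpha_def powr_divide by (simp add: field_simps)
qed

lemma f_alpha_le_iff:
  assumes "\<Delta> \<ge> 1" "0 < a" "0 < b"
  shows "f_alpha \<Delta> \<alpha> a b \<le> a \<longleftrightarrow> 2 \<le> a * (1 + (real \<Delta> - 1) * (b / a) powr \<alpha>)"
proof -
  have "1 + (real \<Delta> - 1) * (b / a) powr \<alpha> > 0"
    using assms by (simp add: add_pos_nonneg)
  then show ?thesis
    using assms by (simp add: f_alpha_eq_ratio divide_le_eq mult.commute)
qed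

lemma f_alpha_swap_ge_iff:
  assumes "\<Delta> \<ge> 1" "0 < a" "0 < b"
  shows "b \<le> f_alpha \<Delta> \<alpha> b a \<longleftrightarrow>
         a * (b / a + (real \<Delta> - 1) * (b / a) powr (1 - \<alpha>)) \<le> 2"
proof -
  define k r where "k = real \<Delta> - 1" and "r = b / a"
  have "r > 0" and b: "b = a * r"
    using assms by (simp_all add: r_def)
  have "(a / b) powr \<alpha> = 1 / r powr \<alpha>"
    using assms by (simp add: r_def powr_divide)
  then have f: "f_alpha \<Delta> \<alpha> b a = 2 / (1 + k / r powr \<alpha>)"
    using assms by (simp add: f_alpha_eq_ratio k_def)
  have denom: "1 + k / r powr \<alpha> > 0"
    using assms \<open>r > 0\<close> by (simp add: k_def add_pos_nonneg)
  have "b * (1 + k / r powr \<alpha>) = a * (r + k * r powr (1 - \<alpha>))"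
    unfolding b using \<open>r > 0\<close> by (simp add: powr_diff field_simps)
  then show ?thesis
    unfolding f pos_le_divide_eq[OF denom] by (simp add: k_def r_def)
qed

lemma ratio_inequalities_incompatible:
  fixes k r \<alpha> :: real
  assumes k: "k \<ge> 0" and \<alpha>: "1/2 \<le> \<alpha>" "\<alpha> \<le> 1" "(2 * \<alpha> - 1) * k * (k + 1) < 1"
    and r: "r > 1"
    and first: "r < 1 + k * r powr \<alpha>"
    and second: "r + k * r powr (1 - \<alpha>) \<le> 1 + k * r powr \<alpha>"
  shows False
proof -
  define s where "s = r powr (1 - \<alpha>)"
  have split_r: "r = s * r powr \<alpha>" and split_r\<alpha>: "r powr \<alpha> = s * r powr (2 * \<alpha> - 1)"
    using r by (simp_all add: s_def flip: powr_add)
  have "r powr \<alpha> \<ge> 1" and "s \<ge> 0"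
    using r \<alpha> by (simp_all add: s_def ge_one_powr_ge_zero)
  with first have "s * r powr \<alpha> < (k + 1) * r powr \<alpha>"
    using k split_r by (simp add: algebra_simps)
  then have s_lt: "s < k + 1"
    using r by simp
  have "r - 1 \<le> k * s * (r powr (2 * \<alpha> - 1) - 1)"
    using second split_r\<alpha> by (simp add: s_def algebra_simps)
  also have "\<dots> \<le> k * (k + 1) * ((2 * \<alpha> - 1) * (r - 1))"
  proof (rule mult_mono)
    show "k * s \<le> k * (k + 1)" using k s_lt by (simp add: mult_left_mono)
    show "r powr (2 * \<alpha> - 1) - 1 \<le> (2 * \<alpha> - 1) * (r - 1)"
      using powr_le_Bernoulli[of r "2 * \<alpha> - 1"] r \<alpha> by simp
    show "0 \<le> r powr (2 * \<alpha> - 1) - 1"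
      using r \<alpha> by (simp add: ge_one_powr_ge_zero)
  qed (use k r \<alpha> in auto)
  also have "\<dots> = ((2 * \<alpha> - 1) * k * (k + 1)) * (r - 1)"
    by (simp add: ac_simps)
  also have "\<dots> < r - 1"
    using \<alpha>(3) r by simp
  finally show False by simp
qed

lemma f_alpha_gt_or_swap_lt:
  assumes \<Delta>: "\<Delta> \<ge> 1" and \<alpha>: "1/2 \<le> \<alpha>" "\<alpha> \<le> 1"
    and small: "(2 * \<alpha> - 1) * (real \<Delta> - 1) * real \<Delta> < 1"
    and ab: "0 < a" "a < b" "b < 2"
  shows "a < f_alpha \<Delta> \<alpha> a b \<or> f_alpha \<Delta> \<alpha> b a < b"
proof (rule ccontr)
  define k r where "k = real \<Delta> - 1" and "r = b / a"
  assume "\<not> ?thesis"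
  then have "2 \<le> a * (1 + k * r powr \<alpha>)" and "a * (r + k * r powr (1 - \<alpha>)) \<le> 2"
    using f_alpha_le_iff[of \<Delta> a b \<alpha>] f_alpha_swap_ge_iff[of \<Delta> a b \<alpha>] \<Delta> ab
    by (auto simp: k_def r_def)
  moreover have "a * r < 2" and "r > 1"
    using ab by (simp_all add: r_def)
  ultimately have "a * r < a * (1 + k * r powr \<alpha>)"
    and "a * (r + k * r powr (1 - \<alpha>)) \<le> a * (1 + k * r powr \<alpha>)"
    by linarith+
  then have "r < 1 + k * r powr \<alpha>" and "r + k * r powr (1 - \<alpha>) \<le> 1 + k * r powr \<alpha>"
    using ab(1) by simp_all
  then show False
    using ratio_inequalities_incompatible[of k \<alpha> r] \<open>r > 1\<close> \<Delta> \<alpha> small by (simp add: k_def)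
qed

theorem mainTheorem9:
  fixes \<Delta> :: nat
  assumes "\<Delta> \<ge> 2"
  shows "\<exists>\<epsilon>0>0. \<epsilon>0 \<le> 1/2 \<and> (\<forall>\<epsilon>. 0 < \<epsilon> \<and> \<epsilon> < \<epsilon>0 \<longrightarrow>
           (\<forall>a b :: real. 0 < a \<and> a < 2 / real \<Delta> \<and> 2 / real \<Delta> < b \<and> b < 2 \<longrightarrow>
              f_alpha \<Delta> (1/2 + \<epsilon>) a b > a \<or> f_alpha \<Delta> (1/2 + \<epsilon>) b a < b))"
proof -
  define c where "c = (real \<Delta> - 1) * real \<Delta>"
  have "c \<ge> 2"
    using assms mult_mono[of 1 "real \<Delta> - 1" 2 "real \<Delta>"] by (simp add: c_def)
  have "a < f_alpha \<Delta> (1/2 + \<epsilon>) a b \<or> f_alpha \<Delta> (1/2 + \<epsilon>) b a < b"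
    if "0 < \<epsilon>" "\<epsilon> < 1 / (2 * c)" "0 < a" "a < 2 / real \<Delta>" "2 / real \<Delta> < b" "b < 2"
    for \<epsilon> a b :: real
  proof (rule f_alpha_gt_or_swap_lt)
    have "\<epsilon> * (2 * c) < 1"
      using that(2) \<open>c \<ge> 2\<close> by (simp add: less_divide_eq)
    then show "(2 * (1/2 + \<epsilon>) - 1) * (real \<Delta> - 1) * real \<Delta> < 1"
      by (simp add: c_def mult.assoc)
    have "1 / (2 * c) \<le> 1/2"
      using \<open>c \<ge> 2\<close> by simp
    then show "1/2 + \<epsilon> \<le> 1"
      using that(2) by linarith
  qed (use assms that in auto)
  moreover have "0 < 1 / (2 * c)" and "1 / (2 * c) \<le> 1/2"
    using \<open>c \<ge> 2\<close> by simp_all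
  ultimately show ?thesis
    by blast
qed

end
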